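(* Let $\gamma\in C^0(\mathbb{R}/\ell\mathbb{Z},\mathbb{R}^3)$ be a closed curve of length $\Lambda\in(0,\infty)$ whose image is invariant under $R_1$, $R_2$ and $R_3$ (i.e. $R_i\gamma(\mathbb{R}/\ell\mathbb{Z})=\gamma(\mathbb{R}/\ell\mathbb{Z})$ for $i=1,2,3$). Then $\gamma(\mathbb{R}/\ell\mathbb{Z})$ is contained in the closed ball of radius $\Lambda/4$ centered at the origin.
   Context: $R_1=\mathrm{diag}(1,-1,-1)$, $R_2=\mathrm{diag}(-1,1,-1)$, $R_3=\mathrm{diag}(-1,-1,1)$ are the rotations by angle $\pi$ about the coordinate axes of $\mathbb{R}^3$. *)

theory Defs
  imports "HOL-Analysis.Analysis"
begin

text \<open>The rotations by angle pi about the coordinate axes of R^3: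
  R1 = diag(1,-1,-1), R2 = diag(-1,1,-1), R3 = diag(-1,-1,1).\<close>

definition R1 :: "real^3^3" where
  "R1 = (\<chi> i j. if i = j then (if i = 1 then 1 else -1) else 0)"

definition R2 :: "real^3^3" where
  "R2 = (\<chi> i j. if i = j then (if i = 2 then 1 else -1) else 0)"

definition R3 :: "real^3^3" where
  "R3 = (\<chi> i j. if i = j then (if i = 3 then 1 else -1) else 0)"

text \<open>Length of a (continuous) curve on [a,b]: supremum over all partitions
  a = t_0 <= t_1 <= ... <= t_n = b of the inscribed polygon lengths
  (value in ereal, so a non-rectifiable curve has length infinity).\<close>

definition curve_length :: "(real \<Rightarrow> 'a::metric_space) \<Rightarrow> real \<Rightarrow> real \<Rightarrow> ereal" where
  "curve_length g a b =
     (SUP tn \<in> {(t, n). t 0 = a \<and> t n = b \<and> (\<forall>i<n. t i \<le> t (Suc i))}.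
        ereal (\<Sum>i<snd tn. dist (g (fst tn (Suc i))) (g (fst tn i))))"

end

theory Submission
  imports Defs
begin

text \<open>For a point \<open>x\<close> of the curve, \<open>R1 x\<close> and \<open>R2 x\<close> lie on the curve too, and a closed curve
  through three points is at least as long as the triangle they span. Since
  \<open>R1 + R2 + R3 = -1\<close>, the vectors \<open>x - Ri x\<close> sum to \<open>4 x\<close>, and the side \<open>R1 x - R2 x = R1 (x - R3 x)\<close>
  has the length of \<open>x - R3 x\<close>; so the triangle inequality bounds its perimeter below by \<open>4 |x|\<close>.\<close>

lemma R1_R2_R3_sum: "R1 *v x + R2 *v x + R3 *v x = - x"
  by (simp add: vec_eq_iff forall_3 matrix_vector_mult_def sum_3 R1_def R2_def R3_def)

lemma R1_R3_eq_R2: "R1 *v (R3 *v x) = R2 *v x"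
  by (simp add: vec_eq_iff forall_3 matrix_vector_mult_def sum_3 R1_def R2_def R3_def)

lemma norm_R1: "norm (R1 *v x) = norm x"
  by (simp add: norm_vec_def L2_set_def sum_3 matrix_vector_mult_def R1_def)

lemma dist_R1_R2: "dist (R1 *v x) (R2 *v x) = dist x (R3 *v x)"
proof -
  have "R1 *v x - R2 *v x = R1 *v (x - R3 *v x)"
    by (simp add: R1_R3_eq_R2 matrix_vector_mult_diff_distrib)
  then show ?thesis
    by (simp add: dist_norm norm_R1)
qed

lemma four_norm_le_R_triangle_perimeter:
  "4 * norm x \<le> dist x (R1 *v x) + dist (R1 *v x) (R2 *v x) + dist (R2 *v x) x"
proof -
  have "(x - R1 *v x) + (x - R2 *v x) + (x - R3 *v x) = x + x + x - (R1 *v x + R2 *v x + R3 *v x)"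
    by (simp add: algebra_simps)
  then have "(x - R1 *v x) + (x - R2 *v x) + (x - R3 *v x) = 4 *\<^sub>R x"
    by (simp add: R1_R2_R3_sum vec_eq_iff)
  then have "4 * norm x = norm ((x - R1 *v x) + (x - R2 *v x) + (x - R3 *v x))"
    by simp
  also have "\<dots> \<le> norm (x - R1 *v x) + norm (x - R2 *v x) + norm (x - R3 *v x)"
    by (meson add_mono norm_triangle_ineq order_trans order_refl)
  finally show ?thesis
    using dist_R1_R2[of x] by (simp add: dist_norm norm_minus_commute)
qed

lemma polygon_le_curve_length:
  assumes "t 0 = a" "t n = b" "\<And>i. i < n \<Longrightarrow> t i \<le> t (Suc i)"
  shows "ereal (\<Sum>i<n. dist (g (t (Suc i))) (g (t i))) \<le> curve_length g a b"
  unfolding curve_length_def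
  using assms by (intro SUP_upper2[where i = "(t, n)"]) auto

lemma closed_curve_sorted_triangle_le_length:
  fixes g :: "real \<Rightarrow> 'a::metric_space"
  assumes length: "curve_length g 0 L = ereal Lam" and closed: "g L = g 0"
    and "0 \<le> a" "a \<le> b" "b \<le> c" "c \<le> L"
  shows "dist (g a) (g b) + dist (g b) (g c) + dist (g c) (g a) \<le> Lam"
proof -
  define t :: "nat \<Rightarrow> real" where "t = (\<lambda>i. [0, a, b, c, L] ! i)"
  have "ereal (\<Sum>i<4. dist (g (t (Suc i))) (g (t i))) \<le> curve_length g 0 L"
    using assms by (intro polygon_le_curve_length) (auto simp: t_def less_Suc_eq numeral_eq_Suc)
  then have "dist (g a) (g 0) + dist (g b) (g a) + dist (g c) (g b) + dist (g L) (g c) \<le> Lam"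
    using length by (simp add: t_def numeral_eq_Suc add_ac)
  moreover have "dist (g c) (g a) \<le> dist (g L) (g c) + dist (g a) (g 0)"
    using closed dist_triangle[of "g c" "g a" "g 0"] by (simp add: dist_commute)
  ultimately show ?thesis
    by (simp add: dist_commute)
qed

lemma closed_curve_triangle_le_length:
  fixes g :: "real \<Rightarrow> 'a::metric_space"
  assumes length: "curve_length g 0 L = ereal Lam" and closed: "g L = g 0"
    and "p \<in> g ` {0..L}" "q \<in> g ` {0..L}" "r \<in> g ` {0..L}"
  shows "dist p q + dist q r + dist r p \<le> Lam"
proof -
  obtain a b c where abc: "a \<in> {0..L}" "b \<in> {0..L}" "c \<in> {0..L}"
    and "p = g a" "q = g b" "r = g c"
    using assms(3-5) by blast
  have "a \<le> b \<and> b \<le> c \<or> a \<le> c \<and> c \<le> b \<or> b \<le> a \<and> a \<le> c \<or> b \<le> c \<and> c \<le> a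
    \<or> c \<le> a \<and> a \<le> b \<or> c \<le> b \<and> b \<le> a"
    by linarith
  then show ?thesis
    using closed_curve_sorted_triangle_le_length[OF length closed, of a b c]
      closed_curve_sorted_triangle_le_length[OF length closed, of a c b]
      closed_curve_sorted_triangle_le_length[OF length closed, of b a c]
      closed_curve_sorted_triangle_le_length[OF length closed, of b c a]
      closed_curve_sorted_triangle_le_length[OF length closed, of c a b]
      closed_curve_sorted_triangle_le_length[OF length closed, of c b a]
      abc \<open>p = g a\<close> \<open>q = g b\<close> \<open>r = g c\<close>
    by (auto simp: dist_commute)
qed

lemma periodic_int_multiple:
  assumes "\<And>t. g (t + L) = g t"
  shows "g (s + of_int k * L) = g s"
proof (induction k rule: int_induct[where k = 0])
  case (step1 i)
  then show ?case
    using assms[of "s + of_int i * L"] by (simp add: algebra_simps)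
next
  case (step2 i)
  then show ?case
    using assms[of "s + of_int (i - 1) * L"] by (simp add: algebra_simps)
qed simp

lemma periodic_range_eq:
  fixes L :: real
  assumes "L > 0" and periodic: "\<And>t. g (t + L) = g t"
  shows "range g = g ` {0..L}"
proof (intro equalityI subsetI)
  fix y assume "y \<in> range g"
  then obtain t where "y = g t" by blast
  define k where "k = \<lfloor>t / L\<rfloor>"
  have "of_int k \<le> t / L" "t / L < of_int k + 1"
    unfolding k_def by linarith+
  then have "of_int k * L \<le> t" "t < (of_int k + 1) * L"
    using \<open>L > 0\<close> by (simp_all add: field_simps)
  moreover have "g (t - of_int k * L) = y"
    using periodic_int_multiple[of g L, OF periodic, of "t - of_int k * L" k] \<open>y = g t\<close> by simp
  ultimately show "y \<in> g ` {0..L}"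
    by (intro image_eqI[where x = "t - of_int k * L"]) (auto simp: algebra_simps)
qed auto

theorem lemma3p13:
  fixes \<gamma> :: "real \<Rightarrow> real^3" and L Lam :: real
  assumes "L > 0"
    and "continuous_on UNIV \<gamma>"
    and "\<And>t. \<gamma> (t + L) = \<gamma> t"
    and "curve_length \<gamma> 0 L = ereal Lam"
    and "0 < Lam"
    and "(\<lambda>x. R1 *v x) ` (\<gamma> ` UNIV) = \<gamma> ` UNIV"
    and "(\<lambda>x. R2 *v x) ` (\<gamma> ` UNIV) = \<gamma> ` UNIV"
    and "(\<lambda>x. R3 *v x) ` (\<gamma> ` UNIV) = \<gamma> ` UNIV"
  shows "\<gamma> ` UNIV \<subseteq> cball 0 (Lam / 4)"
proof
  fix x assume x: "x \<in> range \<gamma>"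
  have range: "range \<gamma> = \<gamma> ` {0..L}"
    using assms(1,3) by (rule periodic_range_eq)
  have "R1 *v x \<in> range \<gamma>" "R2 *v x \<in> range \<gamma>"
    using x assms(6,7) by blast+
  then have "dist x (R1 *v x) + dist (R1 *v x) (R2 *v x) + dist (R2 *v x) x \<le> Lam"
    using x assms(3)[of 0] unfolding range
    by (intro closed_curve_triangle_le_length[OF assms(4)]) auto
  then show "x \<in> cball 0 (Lam / 4)"
    using four_norm_le_R_triangle_perimeter[of x] by simp
qed

end
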